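(* There exists an $\mathrm{RDGDD}(3,4,10\{2\})$.
   Context: A $\mathrm{GDD}(3,4,mv)$ of type $m^v$ is $(X,\mathcal{G},\mathcal{A})$ with $|X|=mv$, $\mathcal{G}$ a partition of $X$ into $v$ groups of size $m$, and $\mathcal{A}$ a set of $4$-subsets of $X$, each meeting every group in at most one point, such that every $3$-subset of $X$ with points in three distinct groups lies in exactly one block. For $x\in G\in\mathcal{G}$, the derived design $(X\setminus G,\mathcal{G}\setminus\{G\},\{A\setminus\{x\}:x\in A\in\mathcal{A}\})$ is a $\mathrm{GDD}(2,3,m(v-1))$ of type $m^{v-1}$ (each pair from distinct groups in exactly one triple). An $\mathrm{RDGDD}(3,4,v\{m\})$ is a $\mathrm{GDD}(3,4,mv)$ of type $m^v$ whose derived design at every point is resolvable, i.e., its blocks can be partitioned into parallel classes (sets of pairwise disjoint blocks covering $X\setminus G$). *)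

theory Defs
  imports "HOL-Library.Disjoint_Sets"
begin

definition gdd34 :: "'a set \<Rightarrow> 'a set set \<Rightarrow> 'a set set \<Rightarrow> nat \<Rightarrow> nat \<Rightarrow> bool" where
  "gdd34 X \<G> \<A> m v \<longleftrightarrow>
     finite X \<and> card X = m * v \<and>
     partition_on X \<G> \<and> card \<G> = v \<and> (\<forall>g\<in>\<G>. card g = m) \<and>
     (\<forall>B\<in>\<A>. B \<subseteq> X \<and> card B = 4 \<and> (\<forall>g\<in>\<G>. card (B \<inter> g) \<le> 1)) \<and>
     (\<forall>T. T \<subseteq> X \<and> card T = 3 \<and> (\<forall>g\<in>\<G>. card (T \<inter> g) \<le> 1)
          \<longrightarrow> (\<exists>!B. B \<in> \<A> \<and> T \<subseteq> B))"

definition derived_blocks :: "'a set set \<Rightarrow> 'a \<Rightarrow> 'a set set" where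
  "derived_blocks \<A> x = {B - {x} | B. B \<in> \<A> \<and> x \<in> B}"

definition parallel_class :: "'a set \<Rightarrow> 'a set set \<Rightarrow> bool" where
  "parallel_class Y C \<longleftrightarrow> disjoint C \<and> \<Union>C = Y"

definition resolvable :: "'a set \<Rightarrow> 'a set set \<Rightarrow> bool" where
  "resolvable Y Bs \<longleftrightarrow> (\<exists>P. partition_on Bs P \<and> (\<forall>C\<in>P. parallel_class Y C))"

text \<open>RDGDD(3,4,v{m}).\<close>
definition rdgdd34 :: "'a set \<Rightarrow> 'a set set \<Rightarrow> 'a set set \<Rightarrow> nat \<Rightarrow> nat \<Rightarrow> bool" where
  "rdgdd34 X \<G> \<A> m v \<longleftrightarrow>
     gdd34 X \<G> \<A> m v \<and>
     (\<forall>G\<in>\<G>. \<forall>x\<in>G. resolvable (X - G) (derived_blocks \<A> x))"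

end

theory Submission
  imports Defs "HOL-Number_Theory.Cong"
begin

(* The design is cyclic: the points are the residues modulo 20, the groups are the pairs
   {i, i + 10}, and the blocks are all translates of twelve base blocks.  Translation by t is an
   automorphism of the design moving 0 to t, so the derived design at any point is a translate of
   the derived design at 0, and every triple meeting three groups can be translated to one
   containing 0.  Both the GDD axiom and the resolvability of the derived designs therefore
   reduce to two finite facts about the 48 triples of the derived design at 0, checked by
   evaluation: they cover every pair of points from distinct groups other than {0, 10} exactly
   once, and they split into eight explicit parallel classes. *)

section \<open>Resolutions and derived designs under injections\<close>

lemma partition_on_set_concat:
  assumes "distinct (concat xss)" "[] \<notin> set xss"
  shows "partition_on (set (concat xss)) (set ` set xss)"
proof (rule partition_onI)
  fix p q assume "p \<in> set ` set xss" "q \<in> set ` set xss" "p \<noteq> q"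
  then show "disjnt p q"
    using assms(1) by (auto simp: distinct_concat_iff disjnt_def)
qed (use assms(2) in auto)

lemma parallel_class_set_concat:
  assumes "distinct (concat xss)"
  shows "parallel_class (set (concat xss)) (set ` set xss)"
  using assms unfolding parallel_class_def
  by (auto simp: distinct_concat_iff disjoint_def)

lemma resolvable_image:
  assumes inj: "inj_on f (\<Union>Bs)" and "resolvable Y Bs"
  shows "resolvable (f ` Y) ((`) f ` Bs)"
proof -
  obtain P where P: "partition_on Bs P" and classes: "\<forall>C\<in>P. parallel_class Y C"
    using assms(2) unfolding resolvable_def by blast
  have "inj_on ((`) f) Bs"
    using inj_on_image_Pow[OF inj] by (rule inj_on_subset) blast
  then have "partition_on ((`) f ` Bs) ((`) ((`) f) ` P - {{}})"
    by (rule partition_on_inj_image[OF P])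
  moreover have "parallel_class (f ` Y) ((`) f ` C)" if "C \<in> P" for C
  proof -
    have "C \<subseteq> Bs" using P \<open>C \<in> P\<close> by (auto simp: partition_on_def)
    then have "inj_on f (\<Union>C)" using inj by (meson Union_mono inj_on_subset)
    moreover have "disjoint C" "\<Union>C = Y"
      using classes \<open>C \<in> P\<close> by (auto simp: parallel_class_def)
    ultimately show ?thesis
      unfolding parallel_class_def by (simp add: disjoint_image image_Union[symmetric])
  qed
  ultimately show ?thesis unfolding resolvable_def by blast
qed

lemma resolvable_set_concat:
  assumes "distinct (map set (concat R))"
    and "\<forall>C\<in>set R. distinct (concat C) \<and> set (concat C) = Y" and "Y \<noteq> {}"
  shows "resolvable Y (set ` set (concat R))"
proof -
  have "partition_on (set (concat R)) (set ` set R)"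
    using assms by (intro partition_on_set_concat) (auto simp: distinct_map)
  moreover have "inj_on set (set (concat R))"
    using assms(1) by (simp add: distinct_map)
  ultimately have "partition_on (set ` set (concat R)) ((`) set ` set ` set R - {{}})"
    by (rule partition_on_inj_image)
  moreover have "parallel_class Y (set ` set C)" if "C \<in> set R" for C
    using parallel_class_set_concat assms(2) that by metis
  ultimately show ?thesis
    unfolding resolvable_def by (auto simp: image_image)
qed

lemma derived_blocks_eq_image: "derived_blocks A x = (\<lambda>B. B - {x}) ` {B \<in> A. x \<in> B}"
  by (auto simp: derived_blocks_def)

lemma derived_blocks_image:
  assumes "inj_on f (insert x (\<Union>A))"
  shows "derived_blocks ((`) f ` A) (f x) = (`) f ` derived_blocks A x"
proof -
  have mem: "f x \<in> f ` B \<longleftrightarrow> x \<in> B" if "B \<in> A" for B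
    using inj_on_image_mem_iff[OF assms] that by blast
  have diff: "f ` B - {f x} = f ` (B - {x})" if "B \<in> A" for B
    using inj_on_image_set_diff[OF assms] that by blast
  have "{B \<in> (`) f ` A. f x \<in> B} = (`) f ` {B \<in> A. x \<in> B}"
    using mem by auto
  then have "derived_blocks ((`) f ` A) (f x) = (\<lambda>B. f ` B - {f x}) ` {B \<in> A. x \<in> B}"
    unfolding derived_blocks_eq_image by (simp add: image_image)
  also have "\<dots> = (\<lambda>B. f ` (B - {x})) ` {B \<in> A. x \<in> B}"
    using diff by (auto intro!: image_cong)
  finally show ?thesis
    unfolding derived_blocks_eq_image by (simp add: image_image)
qed

lemma ex1_image_iff:
  assumes "inj_on g A"
  shows "(\<exists>!y\<in>g ` A. P y) \<longleftrightarrow> (\<exists>!x\<in>A. P (g x))"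
proof
  assume "\<exists>!y\<in>g ` A. P y"
  then obtain x where "x \<in> A" "P (g x)" and uniq: "\<And>y. y \<in> g ` A \<Longrightarrow> P y \<Longrightarrow> y = g x"
    by blast
  then show "\<exists>!x\<in>A. P (g x)"
    using inj_onD[OF assms] by (intro ex1I[of _ x]) blast+
next
  assume "\<exists>!x\<in>A. P (g x)"
  then obtain x where "x \<in> A" "P (g x)" and uniq: "\<And>x'. x' \<in> A \<Longrightarrow> P (g x') \<Longrightarrow> x' = x"
    by blast
  then show "\<exists>!y\<in>g ` A. P y"
    by (intro ex1I[of _ "g x"]) blast+
qed

lemma ex1_superset_image_iff:
  assumes "inj_on f (T \<union> \<Union>A)"
  shows "(\<exists>!B\<in>(`) f ` A. f ` T \<subseteq> B) \<longleftrightarrow> (\<exists>!B\<in>A. T \<subseteq> B)"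
proof -
  have sub: "f ` T \<subseteq> f ` B \<longleftrightarrow> T \<subseteq> B" if "B \<in> A" for B
  proof -
    have "f ` (T \<union> B) = f ` B \<longleftrightarrow> T \<union> B = B"
      by (rule inj_on_image_eq_iff[OF assms]) (use that in auto)
    then show ?thesis by (simp add: subset_Un_eq image_Un)
  qed
  have "inj_on ((`) f) A"
    using inj_on_image_Pow[OF assms] by (rule inj_on_subset) blast
  then have "(\<exists>!B\<in>(`) f ` A. f ` T \<subseteq> B) \<longleftrightarrow> (\<exists>!B\<in>A. f ` T \<subseteq> f ` B)"
    by (rule ex1_image_iff)
  also have "\<dots> \<longleftrightarrow> (\<exists>!B\<in>A. T \<subseteq> B)"
    using sub by (simp cong: conj_cong)
  finally show ?thesis .
qed

lemma ex1_superset_iff_derived_blocks: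
  assumes "x \<in> T"
  shows "(\<exists>!B\<in>A. T \<subseteq> B) \<longleftrightarrow> (\<exists>!D\<in>derived_blocks A x. T - {x} \<subseteq> D)"
proof -
  have "inj_on (\<lambda>B. B - {x}) {B \<in> A. x \<in> B}"
    by (auto simp: inj_on_def)
  then have "(\<exists>!D\<in>derived_blocks A x. T - {x} \<subseteq> D) \<longleftrightarrow> (\<exists>!B\<in>{B \<in> A. x \<in> B}. T - {x} \<subseteq> B - {x})"
    unfolding derived_blocks_eq_image by (rule ex1_image_iff)
  also have "\<dots> \<longleftrightarrow> (\<exists>!B\<in>A. T \<subseteq> B)"
  proof -
    have "B \<in> {B \<in> A. x \<in> B} \<and> T - {x} \<subseteq> B - {x} \<longleftrightarrow> B \<in> A \<and> T \<subseteq> B" for B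
      using assms by blast
    then show ?thesis by simp
  qed
  finally show ?thesis ..
qed

lemma ex1_image_if_length_filter_eq_1:
  assumes "length (filter (\<lambda>t. P (f t)) xs) = 1"
  shows "\<exists>!D\<in>f ` set xs. P D"
proof -
  obtain t where "filter (\<lambda>t. P (f t)) xs = [t]"
    using assms by (auto simp: length_Suc_conv)
  then have "{t' \<in> set xs. P (f t')} = {t}"
    by (metis set_filter empty_set list.simps(15))
  then have "t \<in> set xs" "P (f t)" and uniq: "\<And>t'. t' \<in> set xs \<Longrightarrow> P (f t') \<Longrightarrow> t' = t"
    by blast+
  then show ?thesis
    by (intro ex1I[of _ "f t"]) blast+
qed

section \<open>A cyclic design on the residues modulo 20\<close>

definition shift :: "nat \<Rightarrow> nat \<Rightarrow> nat" where
  "shift t y = (y + t) mod 20"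

definition points :: "nat set" where
  "points = {..<20}"

definition groups :: "nat set set" where
  "groups = (\<lambda>i. {i, i + 10}) ` {..<10}"

definition base_blocks :: "nat list list" where
  "base_blocks = [[0, 1, 2, 16], [0, 1, 7, 8], [0, 1, 3, 4], [0, 1, 5, 9], [0, 1, 6, 12],
    [0, 2, 6, 11], [0, 2, 4, 7], [0, 2, 8, 15], [0, 2, 9, 13], [0, 3, 9, 12], [0, 3, 7, 15],
    [0, 2, 14, 17]]"

definition blocks :: "nat set set" where
  "blocks = {shift t ` set b | b t. b \<in> set base_blocks}"

definition derived_triples0 :: "nat list list" where
  "derived_triples0 =
    [removeAll 0 (map (shift t) b). b \<leftarrow> base_blocks, t \<leftarrow> [0..<20], 0 \<in> shift t ` set b]"

definition resolution0 :: "nat list list list" where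
  "resolution0 =
    [[[8, 9, 14], [3, 7, 15], [4, 12, 17], [6, 13, 18], [5, 11, 19], [1, 2, 16]],
     [[4, 9, 18], [7, 12, 14], [8, 13, 16], [1, 15, 19], [2, 6, 11], [3, 5, 17]],
     [[3, 6, 8], [11, 12, 16], [1, 5, 9], [14, 18, 19], [2, 4, 7], [13, 15, 17]],
     [[1, 6, 12], [9, 11, 15], [5, 7, 13], [2, 14, 17], [3, 16, 18], [4, 8, 19]],
     [[3, 11, 14], [2, 9, 13], [1, 7, 8], [12, 15, 18], [16, 17, 19], [4, 5, 6]],
     [[12, 13, 19], [6, 14, 15], [7, 9, 16], [2, 5, 18], [1, 3, 4], [8, 11, 17]],
     [[1, 17, 18], [3, 9, 12], [6, 7, 19], [5, 14, 16], [4, 11, 13], [2, 8, 15]],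
     [[5, 8, 12], [6, 9, 17], [4, 15, 16], [2, 3, 19], [1, 13, 14], [7, 11, 18]]]"

lemma base_blocks_transversal:
  "\<forall>b\<in>set base_blocks. length b = 4 \<and> (\<forall>y\<in>set b. y < 20) \<and> distinct (map (\<lambda>y. y mod 10) b)"
  by code_simp

lemma derived_triples0_eq_resolution0: "set ` set derived_triples0 = set ` set (concat resolution0)"
  by code_simp

lemma resolution0_classes:
  "\<forall>C\<in>set resolution0. distinct (concat C) \<and> set (concat C) = points - {0, 10}"
  unfolding points_def by code_simp

lemma resolution0_distinct: "distinct (map set (concat resolution0))"
  by code_simp

(* The quantifiers range over lists so that the statement can be evaluated. *)
lemma resolution0_covers_pairs:
  "\<forall>u\<in>set [0..<20]. \<forall>v\<in>set [0..<u]. u mod 10 \<noteq> 0 \<and> v mod 10 \<noteq> 0 \<and> u mod 10 \<noteq> v mod 10 \<longrightarrow>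
     length (filter (\<lambda>t. {u, v} \<subseteq> set t) (concat resolution0)) = 1"
  by code_simp

lemma shift_lt [simp]: "shift t y < 20"
  by (simp add: shift_def)

lemma shift_shift: "shift s (shift t y) = shift (t + s) y"
  by (simp add: shift_def mod_add_left_eq add.assoc)

lemma shift_add_mult_20: "shift (t + 20 * k) = shift t"
  by (simp add: shift_def fun_eq_iff add.assoc[symmetric])

lemma shift_mod_10: "shift t y mod 10 = (y + t) mod 10"
  by (simp add: shift_def mod_mod_cancel)

(* 19 t is the inverse of t modulo 20, which avoids truncated subtraction. *)
lemma shift_inverse: "y < 20 \<Longrightarrow> shift (19 * t) (shift t y) = y"
  using shift_add_mult_20[of 0 t] by (simp add: shift_shift) (simp add: shift_def)

lemma inj_on_shift: "inj_on (shift t) points"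
  by (rule inj_on_inverseI[where g = "shift (19 * t)"]) (simp add: points_def shift_inverse)

lemma shift_points: "shift t ` points = points"
  by (rule endo_inj_surj) (auto simp: points_def inj_on_shift[unfolded points_def])

lemma shift_mod_20: "shift (t mod 20) = shift t"
  by (simp add: shift_def fun_eq_iff mod_add_right_eq)

lemma inj_on_mod_10_shift:
  assumes "inj_on (\<lambda>y. y mod 10) S"
  shows "inj_on (\<lambda>y. y mod 10) (shift t ` S)"
proof (rule inj_on_imageI, rule inj_onI)
  fix y z assume "y \<in> S" "z \<in> S" and "((\<lambda>y. y mod 10) \<circ> shift t) y = ((\<lambda>y. y mod 10) \<circ> shift t) z"
  then have "(y + t) mod 10 = (z + t) mod 10"
    by (simp add: shift_mod_10)
  then have "y mod 10 = z mod 10"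
    using cong_add_rcancel_nat[of y t z 10] by (simp add: cong_def)
  then show "y = z"
    using inj_onD[OF assms] \<open>y \<in> S\<close> \<open>z \<in> S\<close> by blast
qed

lemma lt_20_cases: "(y::nat) < 20 \<Longrightarrow> y = y mod 10 \<or> y = y mod 10 + 10"
  by (cases "y < 10") (auto simp: le_mod_geq)

lemma inj_on_iff_card_fibres_le_1:
  assumes "finite S"
  shows "inj_on f S \<longleftrightarrow> (\<forall>i. card {x \<in> S. f x = i} \<le> 1)"
  using assms by (auto simp: inj_on_def card_le_Suc0_iff_eq)

lemma transversal_iff_card_groups:
  assumes "S \<subseteq> points"
  shows "(\<forall>g\<in>groups. card (S \<inter> g) \<le> 1) \<longleftrightarrow> inj_on (\<lambda>y. y mod 10) S"
proof -
  have "finite S" using assms finite_subset by (auto simp: points_def)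
  have fibre: "S \<inter> {i, i + 10} = {y \<in> S. y mod 10 = i}" if "i < 10" for i
    using assms that lt_20_cases by (auto simp: points_def subset_iff)
  have "(\<forall>g\<in>groups. card (S \<inter> g) \<le> 1) \<longleftrightarrow> (\<forall>i<10. card {y \<in> S. y mod 10 = i} \<le> 1)"
    using fibre by (auto simp: groups_def)
  also have "\<dots> \<longleftrightarrow> (\<forall>i. card {y \<in> S. y mod 10 = i} \<le> 1)"
  proof -
    have "{y \<in> S. y mod 10 = i} = {}" if "\<not> i < 10" for i
      using that by auto
    then show ?thesis by (metis card.empty zero_le_one)
  qed
  also have "\<dots> \<longleftrightarrow> inj_on (\<lambda>y. y mod 10) S"
    by (rule inj_on_iff_card_fibres_le_1[OF \<open>finite S\<close>, symmetric])
  finally show ?thesis .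
qed

lemma partition_on_groups: "partition_on points groups"
proof (rule partition_onI)
  show "\<Union>groups = points"
  proof
    show "\<Union>groups \<subseteq> points" by (auto simp: groups_def points_def)
    show "points \<subseteq> \<Union>groups"
    proof
      fix y assume "y \<in> points"
      then have "y \<in> {y mod 10, y mod 10 + 10}" "y mod 10 < 10"
        using lt_20_cases[of y] by (auto simp: points_def)
      then show "y \<in> \<Union>groups" unfolding groups_def by blast
    qed
  qed
qed (auto simp: groups_def disjnt_def)

lemma card_groups: "card groups = 10"
proof -
  have "inj_on (\<lambda>i. {i, i + 10 :: nat}) {..<10}"
    by (auto simp: inj_on_def doubleton_eq_iff)
  then show ?thesis by (simp add: groups_def card_image)
qed

lemma card_group: "g \<in> groups \<Longrightarrow> card g = 2"
  by (auto simp: groups_def)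

lemma points_diff_group:
  assumes "g \<in> groups" "x \<in> g"
  shows "points - g = shift x ` (points - {0, 10})"
proof -
  have "shift x ` {0, 10} = g"
    using assms by (auto simp: groups_def shift_def)
  then show ?thesis
    using inj_on_image_set_diff[OF inj_on_shift] shift_points by (auto simp: points_def)
qed

lemma blocks_shift: "(`) (shift s) ` blocks = blocks"
proof
  show "(`) (shift s) ` blocks \<subseteq> blocks"
    by (auto simp: blocks_def image_image shift_shift) blast
  show "blocks \<subseteq> (`) (shift s) ` blocks"
  proof
    fix B assume "B \<in> blocks"
    then obtain b t where b: "b \<in> set base_blocks" and B: "B = shift t ` set b"
      by (auto simp: blocks_def)
    have "B = shift s ` shift (t + 19 * s) ` set b"
      using shift_add_mult_20[of t s] by (simp add: B image_image shift_shift add.assoc)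
    then show "B \<in> (`) (shift s) ` blocks"
      using b by (auto simp: blocks_def)
  qed
qed

lemma block_subset_points: "B \<in> blocks \<Longrightarrow> B \<subseteq> points"
  by (auto simp: blocks_def points_def)

lemma block_card_and_transversal:
  assumes "B \<in> blocks"
  shows "card B = 4" "inj_on (\<lambda>y. y mod 10) B"
proof -
  obtain b t where b: "b \<in> set base_blocks" and B: "B = shift t ` set b"
    using assms by (auto simp: blocks_def)
  have "length b = 4" "set b \<subseteq> points" and res: "distinct (map (\<lambda>y. y mod 10) b)"
    using base_blocks_transversal b by (auto simp: points_def)
  then have "card (set b) = 4"
    by (simp add: distinct_card distinct_map)
  then show "card B = 4"
    using inj_on_subset[OF inj_on_shift \<open>set b \<subseteq> points\<close>] by (simp add: B card_image)
  show "inj_on (\<lambda>y. y mod 10) B"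
    unfolding B using res by (intro inj_on_mod_10_shift) (simp add: distinct_map)
qed

lemma blocks_eq_shifts_lt_20: "blocks = {shift t ` set b | b t. b \<in> set base_blocks \<and> t < 20}"
proof -
  have "shift t ` set b = shift (t mod 20) ` set b" "t mod 20 < 20" for t b
    by (simp_all add: shift_mod_20)
  then show ?thesis
    unfolding blocks_def by blast
qed

lemma derived_blocks_0_eq_derived_triples0: "derived_blocks blocks 0 = set ` set derived_triples0"
proof -
  let ?D = "{shift t ` set b - {0} | b t. b \<in> set base_blocks \<and> t < 20 \<and> 0 \<in> shift t ` set b}"
  have "derived_blocks blocks 0 = ?D"
    unfolding derived_blocks_def blocks_eq_shifts_lt_20 by auto
  also have "?D = set ` set derived_triples0"
  proof (intro set_eqI iffI)
    fix D assume "D \<in> set ` set derived_triples0"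
    then obtain b t where "b \<in> set base_blocks" "t < 20" "0 \<in> shift t ` set b" "D = shift t ` set b - {0}"
      unfolding derived_triples0_def by (auto split: if_splits)
    then show "D \<in> ?D"
      by blast
  next
    fix D assume "D \<in> ?D"
    then obtain b t where "b \<in> set base_blocks" "t < 20" "0 \<in> shift t ` set b" "D = shift t ` set b - {0}"
      by blast
    moreover from this have "removeAll 0 (map (shift t) b) \<in> set derived_triples0"
      unfolding derived_triples0_def by (auto intro!: bexI[of _ b] bexI[of _ t])
    ultimately show "D \<in> set ` set derived_triples0"
      by (metis image_eqI list.set_map set_removeAll)
  qed
  finally show ?thesis .
qed

lemma derived_blocks_0_eq_resolution0: "derived_blocks blocks 0 = set ` set (concat resolution0)"
  using derived_blocks_0_eq_derived_triples0 derived_triples0_eq_resolution0 by simp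

lemma mod_10_neq_0_outside_group_0: "y \<in> points - {0, 10} \<Longrightarrow> y mod 10 \<noteq> 0"
  using lt_20_cases[of y] by (auto simp: points_def)

lemma derived_blocks_0_covers_pairs:
  assumes "u \<in> points - {0, 10}" "v \<in> points - {0, 10}" "u mod 10 \<noteq> v mod 10"
  shows "\<exists>!D\<in>derived_blocks blocks 0. {u, v} \<subseteq> D"
proof -
  have count: "length (filter (\<lambda>t. {u, v} \<subseteq> set t) (concat resolution0)) = 1"
    if "u \<in> points - {0, 10}" "v \<in> points - {0, 10}" "u mod 10 \<noteq> v mod 10" "v < u" for u v
    using resolution0_covers_pairs that mod_10_neq_0_outside_group_0 by (auto simp: points_def)
  have "u \<noteq> v" using assms(3) by auto
  then consider "v < u" | "u < v" by linarith
  then have "length (filter (\<lambda>t. {u, v} \<subseteq> set t) (concat resolution0)) = 1"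
  proof cases
    case 1
    then show ?thesis using count assms by blast
  next
    case 2
    then show ?thesis using count[of v u] assms by (simp add: insert_commute)
  qed
  then show ?thesis
    unfolding derived_blocks_0_eq_resolution0 by (rule ex1_image_if_length_filter_eq_1)
qed

lemma ex1_block_superset_through_0:
  assumes T: "T \<subseteq> points" "card T = 3" "inj_on (\<lambda>y. y mod 10) T" and "0 \<in> T"
  shows "\<exists>!B\<in>blocks. T \<subseteq> B"
proof -
  have "card (T - {0}) = 2"
    using T(2) \<open>0 \<in> T\<close> by (simp add: card_Diff_singleton)
  then obtain u v where uv: "T - {0} = {u, v}" "u \<noteq> v"
    by (auto simp: card_2_iff)
  have "u \<in> T - {0}" "v \<in> T - {0}"
    using uv(1) by simp_all
  then have "u \<in> T" "v \<in> T" "u \<noteq> 0" "v \<noteq> 0"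
    by simp_all
  then have "u mod 10 \<noteq> 0 mod 10" "v mod 10 \<noteq> 0 mod 10" "u mod 10 \<noteq> v mod 10"
    using inj_onD[OF T(3) _ _ \<open>0 \<in> T\<close>] inj_onD[OF T(3) _ \<open>u \<in> T\<close> \<open>v \<in> T\<close>] uv(2)
    by blast+
  then have "u \<in> points - {0, 10}" "v \<in> points - {0, 10}" "u mod 10 \<noteq> v mod 10"
    using \<open>u \<in> T\<close> \<open>v \<in> T\<close> T(1) by auto
  then have "\<exists>!D\<in>derived_blocks blocks 0. T - {0} \<subseteq> D"
    unfolding uv(1) by (rule derived_blocks_0_covers_pairs)
  then show ?thesis
    using ex1_superset_iff_derived_blocks[OF \<open>0 \<in> T\<close>] by (simp only:)
qed

lemma ex1_block_superset:
  assumes T: "T \<subseteq> points" "card T = 3" "inj_on (\<lambda>y. y mod 10) T"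
  shows "\<exists>!B\<in>blocks. T \<subseteq> B"
proof -
  obtain a where "a \<in> T" using T(2) by fastforce
  then have "a < 20" using T(1) by (auto simp: points_def)
  have "T \<union> \<Union>blocks \<subseteq> points"
    using T(1) block_subset_points by blast
  then have "inj_on (shift (20 - a)) (T \<union> \<Union>blocks)"
    using inj_on_shift by (rule inj_on_subset[rotated])
  then have "(\<exists>!B\<in>(`) (shift (20 - a)) ` blocks. shift (20 - a) ` T \<subseteq> B) \<longleftrightarrow> (\<exists>!B\<in>blocks. T \<subseteq> B)"
    by (rule ex1_superset_image_iff)
  moreover have "\<exists>!B\<in>blocks. shift (20 - a) ` T \<subseteq> B"
  proof (rule ex1_block_superset_through_0)
    show "shift (20 - a) ` T \<subseteq> points" "card (shift (20 - a) ` T) = 3"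
      "inj_on (\<lambda>y. y mod 10) (shift (20 - a) ` T)"
      using T inj_on_subset[OF inj_on_shift T(1)] inj_on_mod_10_shift
      by (auto simp: card_image points_def)
    have "shift (20 - a) a = 0"
      using \<open>a < 20\<close> by (simp add: shift_def)
    then show "0 \<in> shift (20 - a) ` T"
      using \<open>a \<in> T\<close> by (metis image_eqI)
  qed
  ultimately show ?thesis
    by (simp only: blocks_shift)
qed

lemma resolvable_derived_blocks_0: "resolvable (points - {0, 10}) (derived_blocks blocks 0)"
proof -
  have "1 \<in> points - {0, 10}"
    by (simp add: points_def)
  then show ?thesis
    unfolding derived_blocks_0_eq_resolution0
    by (intro resolvable_set_concat[OF resolution0_distinct resolution0_classes]) blast
qed

lemma resolvable_derived_blocks:
  assumes "G \<in> groups" "x \<in> G"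
  shows "resolvable (points - G) (derived_blocks blocks x)"
proof -
  have "x < 20" using assms by (auto simp: groups_def)
  then have x: "shift x 0 = x" by (simp add: shift_def)
  have "insert 0 (\<Union>blocks) \<subseteq> points"
    using block_subset_points by (auto simp: points_def)
  then have "derived_blocks ((`) (shift x) ` blocks) (shift x 0) = (`) (shift x) ` derived_blocks blocks 0"
    using inj_on_shift by (intro derived_blocks_image) (rule inj_on_subset)
  then have derived: "derived_blocks blocks x = (`) (shift x) ` derived_blocks blocks 0"
    by (simp only: blocks_shift x)
  have "\<Union>(derived_blocks blocks 0) \<subseteq> points"
    using block_subset_points by (auto simp: derived_blocks_def)
  then have "inj_on (shift x) (\<Union>(derived_blocks blocks 0))"
    using inj_on_shift by (rule inj_on_subset[rotated])
  then show ?thesis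
    unfolding derived points_diff_group[OF assms]
    using resolvable_derived_blocks_0 by (rule resolvable_image)
qed

lemma gdd34_blocks: "gdd34 points groups blocks 2 10"
proof -
  have "B \<subseteq> points \<and> card B = 4 \<and> (\<forall>g\<in>groups. card (B \<inter> g) \<le> 1)" if "B \<in> blocks" for B
    using block_subset_points[OF that] block_card_and_transversal[OF that]
      transversal_iff_card_groups[OF block_subset_points[OF that]]
    by simp
  moreover have "\<exists>!B. B \<in> blocks \<and> T \<subseteq> B"
    if "T \<subseteq> points" "card T = 3" "\<forall>g\<in>groups. card (T \<inter> g) \<le> 1" for T
    using ex1_block_superset[OF that(1,2)] transversal_iff_card_groups[OF that(1)] that(3)
    by simp
  ultimately show ?thesis
    unfolding gdd34_def using partition_on_groups card_groups card_group
    by (simp add: points_def)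
qed

theorem lemma3p7:
  shows "\<exists>(X :: nat set) \<G> \<A>. rdgdd34 X \<G> \<A> 2 10"
  using gdd34_blocks resolvable_derived_blocks unfolding rdgdd34_def by blast

end
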